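(* Let $$\mathrm{V}(\ell,u)=\frac12\int_\ell^{\pi/2}\mathrm{Im}\,\log\frac{1-i\sqrt{u^2/\sin^2\sigma-1}}{1+i\sqrt{u^2/\sin^2\sigma-1}}\,\mathrm{d}\sigma,\qquad \ell\in\mathbb{R},\ u\in\mathbb{R}\setminus\{0\}.$$ Then: (i) $\mathrm{V}$ is continuous and almost everywhere differentiable on its domain; and for all $\ell\in\mathbb{R}$, $u\neq 0$: (ii) $\mathrm{V}(\ell,u)=\mathrm{V}(\ell,-u)$; (iii) $\mathrm{V}(\pi-\ell,u)=-\mathrm{V}(\ell,u)$; (iv) $\mathrm{V}(\ell,u)+\mathrm{V}(-\ell,u)=2\,\mathrm{V}(0,u)$; (v) $\mathrm{V}(\ell+k\pi,u)=\mathrm{V}(\ell,u)-2k\,\mathrm{V}(0,u)$ for all $k\in\mathbb{Z}$.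
   Context: The square root is the principal one ($\sqrt{x}=i\sqrt{|x|}$ for $x<0$) and $\log$ is the principal logarithm with branch cut along $(-\infty,0]$ (imaginary part in $(-\pi,\pi]$). The integrand is defined for $\sin\sigma\neq0$, i.e. almost everywhere. *)

theory Defs
  imports "HOL-Analysis.Analysis"
begin

definition Vintegrand :: "real \<Rightarrow> real \<Rightarrow> real" where
  "Vintegrand u \<sigma> =
     (let s = csqrt (complex_of_real (u\<^sup>2 / (sin \<sigma>)\<^sup>2 - 1))
      in Im (Ln ((1 - \<i> * s) / (1 + \<i> * s))))"

definition V :: "real \<Rightarrow> real \<Rightarrow> real" where
  "V l u = (1/2) * (LBINT \<sigma>=l..pi/2. Vintegrand u \<sigma>)"

end

theory Submission
  imports Defs
begin

text \<open>For \<open>u \<noteq> 0\<close> and \<open>sin \<sigma> \<noteq> 0\<close> the square root in the integrand is either real, and then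
  the integrand is \<open>-2 arctan\<close> of it, or purely imaginary of modulus less than one, and then the
  logarithm is real. In both cases the integrand is \<open>-2 \<phi>(|u|, \<sigma>)\<close> with
  \<open>\<phi>(a, \<sigma>) = arccos (min 1 (|sin \<sigma>| / a))\<close>, a continuous function of \<open>(a, \<sigma>)\<close> for \<open>a > 0\<close>
  which is even, symmetric about \<open>\<pi>/2\<close> and \<open>\<pi>\<close>-periodic in \<open>\<sigma>\<close>. Hence
  \<open>V(l, u) = \<Phi>(l, |u|) - \<Phi>(\<pi>/2, |u|)\<close> for the primitive \<open>\<Phi>(l, a) = \<integral>\<^sub>0\<^sup>l \<phi>(a, \<sigma>) d\<sigma>\<close>, and the
  symmetries of \<open>\<phi>\<close> give (ii)--(v). Continuity follows by rescaling the integral to \<open>[0, 1]\<close>.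

  \<open>\<Phi>\<close> is differentiable in \<open>l\<close>; in \<open>a\<close> it is differentiable except on the null set
  \<open>a = 1\<close> or \<open>sin\<^sup>2 l = a\<^sup>2\<close>. By the symmetries it suffices to take \<open>0 \<le> l \<le> \<pi>/2\<close>. If
  \<open>sin l < a\<close>, then \<open>\<phi>(a, \<sigma>) = arccos (sin \<sigma> / a)\<close> on \<open>[0, l]\<close> is smooth in \<open>a\<close>. If \<open>a < sin l\<close>,
  then \<open>\<phi>(a, \<cdot>)\<close> vanishes on \<open>[l, \<pi>/2]\<close>, so \<open>\<Phi>(l, a) = \<Phi>(\<pi>/2, a)\<close>, and the substitution
  \<open>\<sigma> = arcsin (a sin t)\<close> turns the latter into an integral with a smooth parameter \<open>a < 1\<close>.\<close>

lemma DERIV_interval_integral_upper: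
  fixes f :: "real \<Rightarrow> real" and a :: real
  assumes "continuous_on UNIV f"
  shows "DERIV (\<lambda>x. LBINT s=a..x. f s) x :> f x"
proof -
  have "((\<lambda>x. LBINT s=a..x. f s) has_vector_derivative f x) (at x within {min x a - 1 .. max x a + 1})"
    by (rule interval_integral_FTC2) (auto intro: continuous_on_subset[OF assms])
  moreover have "at x within {min x a - 1 .. max x a + 1} = at x"
    by (rule at_within_interior) auto
  ultimately show ?thesis by (simp add: has_real_derivative_iff_has_vector_derivative)
qed

lemma interval_integral_reflect_upper:
  fixes f :: "real \<Rightarrow> real"
  assumes f: "continuous_on UNIV f" and sym: "\<And>x. f (c - x) = f x"
  shows "(LBINT s=(0::real)..c - l. f s) = (LBINT s=(0::real)..c. f s) - (LBINT s=(0::real)..l. f s)"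
proof -
  define F where "F l = (LBINT s=(0::real)..l. f s)" for l :: real
  have F': "DERIV F x :> f x" for x
    unfolding F_def by (rule DERIV_interval_integral_upper[OF f])
  have "DERIV (\<lambda>l. F (c - l) + F l) x :> f (c - x) * (- 1) + f x" for x
    by (intro DERIV_add DERIV_chain2[OF F'] F' derivative_eq_intros) auto
  then have "DERIV (\<lambda>l. F (c - l) + F l) x :> 0" for x by (simp add: sym)
  then have "F (c - l) + F l = F (c - 0) + F 0"
    by (intro DERIV_isconst_all) auto
  then show ?thesis by (simp add: F_def)
qed

lemma interval_integral_periodic_upper:
  fixes f :: "real \<Rightarrow> real"
  assumes f: "continuous_on UNIV f" and periodic: "\<And>x. f (x + c) = f x"
  shows "(LBINT s=(0::real)..l + of_int k * c. f s)
           = (LBINT s=(0::real)..l. f s) + of_int k * (LBINT s=(0::real)..c. f s)"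
proof -
  define F where "F l = (LBINT s=(0::real)..l. f s)" for l :: real
  have F': "DERIV F x :> f x" for x
    unfolding F_def by (rule DERIV_interval_integral_upper[OF f])
  have "DERIV (\<lambda>l. F (l + c) - F l) x :> f (x + c) * 1 - f x" for x
    by (intro DERIV_diff DERIV_chain2[OF F'] F' derivative_eq_intros) auto
  then have "DERIV (\<lambda>l. F (l + c) - F l) x :> 0" for x by (simp add: periodic)
  then have shift: "F (l + c) = F l + F c" for l
    using DERIV_isconst_all[of "\<lambda>l. F (l + c) - F l" l 0] by (simp add: F_def)
  have "F (l + of_int k * c) = F l + of_int k * F c"
  proof (induction k rule: int_induct[where k=0])
    case (step1 i)
    have "l + of_int (i + 1) * c = (l + of_int i * c) + c" by (simp add: algebra_simps)
    then show ?case using step1 shift[of "l + of_int i * c"] by (simp add: algebra_simps)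
  next
    case (step2 i)
    have "l + of_int i * c = (l + of_int (i - 1) * c) + c" by (simp add: algebra_simps)
    then show ?case using step2 shift[of "l + of_int (i - 1) * c"] by (simp add: algebra_simps)
  qed simp
  then show ?thesis by (simp add: F_def)
qed

lemma differentiable_transform_within_open:
  assumes "f differentiable (at x)" "open S" "x \<in> S" "\<And>y. y \<in> S \<Longrightarrow> f y = g y"
  shows "g differentiable (at x)"
proof -
  obtain D where "(f has_derivative D) (at x)" using assms(1) unfolding differentiable_def ..
  then have "(g has_derivative D) (at x)"
    using assms(2-4) by (rule has_derivative_transform_within_open)
  then show ?thesis unfolding differentiable_def by blast
qed

definition phi :: "real \<Rightarrow> real \<Rightarrow> real" where
  "phi a s = arccos (min 1 (\<bar>sin s\<bar> / a))"

definition Phi :: "real \<Rightarrow> real \<Rightarrow> real" where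
  "Phi l a = (LBINT s=(0::real)..l. phi a s)"

lemma Im_Ln_Cayley_of_real:
  "Im (Ln ((1 - \<i> * complex_of_real t) / (1 + \<i> * complex_of_real t))) = - 2 * arctan t"
proof -
  have "Arctan (complex_of_real t) = (\<i>/2) * Ln ((1 - \<i> * t) / (1 + \<i> * t))"
    by (simp add: Arctan_def)
  hence "Ln ((1 - \<i> * t) / (1 + \<i> * t)) = -2 * \<i> * complex_of_real (arctan t)"
    by (simp add: Arctan_of_real[symmetric] field_simps)
  thus ?thesis by simp
qed

lemma arctan_sqrt_eq_arccos:
  assumes "0 < x" "x \<le> a"
  shows "arctan (sqrt (a\<^sup>2 / x\<^sup>2 - 1)) = arccos (x / a)"
proof -
  have ge: "a\<^sup>2 / x\<^sup>2 \<ge> 1" using assms by (simp add: power_mono)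
  hence "cos (arctan (sqrt (a\<^sup>2 / x\<^sup>2 - 1))) = x / a"
    using assms by (simp add: cos_arctan real_sqrt_divide)
  moreover have "0 \<le> arctan (sqrt (a\<^sup>2 / x\<^sup>2 - 1))"
    using arctan_monotone'[of 0 "sqrt (a\<^sup>2 / x\<^sup>2 - 1)"] ge by simp
  moreover have "arctan (sqrt (a\<^sup>2 / x\<^sup>2 - 1)) \<le> pi"
    using arctan_ubound[of "sqrt (a\<^sup>2 / x\<^sup>2 - 1)"] pi_gt_zero by linarith
  ultimately show ?thesis by (metis arccos_cos)
qed

lemma Vintegrand_eq_phi:
  assumes "u \<noteq> 0" "sin s \<noteq> 0"
  shows "Vintegrand u s = - 2 * phi \<bar>u\<bar> s"
proof -
  define x a where "x = \<bar>sin s\<bar>" and "a = \<bar>u\<bar>"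
  have x: "x > 0" and a: "a > 0" using assms by (auto simp: x_def a_def)
  have radicand: "u\<^sup>2 / (sin s)\<^sup>2 - 1 = a\<^sup>2 / x\<^sup>2 - 1" by (simp add: x_def a_def)
  show ?thesis
  proof (cases "x \<le> a")
    case True
    hence "a\<^sup>2 / x\<^sup>2 - 1 \<ge> 0" using x by (simp add: power_mono)
    hence "Vintegrand u s = - 2 * arctan (sqrt (a\<^sup>2 / x\<^sup>2 - 1))"
      unfolding Vintegrand_def Let_def radicand by (simp add: csqrt_of_real Im_Ln_Cayley_of_real)
    also have "\<dots> = - 2 * arccos (x / a)" using arctan_sqrt_eq_arccos[OF x True] by simp
    finally show ?thesis using True x a by (simp add: phi_def x_def a_def)
  next
    case False
    define r where "r = sqrt (1 - a\<^sup>2 / x\<^sup>2)"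
    have lt: "a\<^sup>2 / x\<^sup>2 < 1" using False x a by (simp add: power_strict_mono)
    have r: "0 < r" "r < 1" using lt a x by (simp_all add: r_def)
    have "csqrt (complex_of_real (a\<^sup>2 / x\<^sup>2 - 1)) = \<i> * r"
      using lt by (simp add: csqrt_of_real' r_def)
    hence "Vintegrand u s = Im (Ln (complex_of_real ((1 + r) / (1 - r))))"
      unfolding Vintegrand_def Let_def radicand by simp
    also have "\<dots> = 0"
      using r by (subst Ln_of_real) simp_all
    finally show ?thesis using False a by (simp add: phi_def x_def a_def)
  qed
qed

lemma continuous_on_phi_joint: "continuous_on ({0<..} \<times> UNIV) (\<lambda>(a, s). phi a s)"
  unfolding phi_def split_beta by (intro continuous_intros) (auto simp: divide_simps)

lemma continuous_on_phi: "a > 0 \<Longrightarrow> continuous_on UNIV (phi a)"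
  unfolding phi_def by (intro continuous_intros) (auto simp: divide_simps)

lemma phi_uminus: "phi a (- s) = phi a s"
  and phi_pi_minus: "phi a (pi - s) = phi a s"
  and phi_plus_pi: "phi a (s + pi) = phi a s"
  by (simp_all add: phi_def)

lemma phi_eq_0: "0 < a \<Longrightarrow> a \<le> \<bar>sin s\<bar> \<Longrightarrow> phi a s = 0"
  by (simp add: phi_def)

lemma interval_integrable_phi:
  fixes x y :: real
  shows "a > 0 \<Longrightarrow> interval_lebesgue_integrable lborel x y (phi a)"
  using continuous_on_phi[of a] by (intro interval_integrable_isCont) (simp add: continuous_on_eq_continuous_at)

lemma Phi_diff:
  assumes "a > 0"
  shows "Phi m a - Phi l a = (LBINT s=l..m. phi a s)"
proof -
  have "Phi l a + (LBINT s=l..m. phi a s) = Phi m a"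
    unfolding Phi_def
    by (rule interval_integral_sum)
       (use interval_integrable_phi[OF assms, of "min 0 (min l m)" "max 0 (max l m)"] in simp)
  thus ?thesis by simp
qed

lemma Phi_0 [simp]: "Phi 0 a = 0"
  by (simp add: Phi_def)

lemma Phi_uminus: "a > 0 \<Longrightarrow> Phi (- l) a = - Phi l a"
  using interval_integral_reflect_upper[OF continuous_on_phi, of a 0 l]
  by (simp add: Phi_def phi_uminus)

lemma Phi_pi_minus: "a > 0 \<Longrightarrow> Phi (pi - l) a = Phi pi a - Phi l a"
  using interval_integral_reflect_upper[OF continuous_on_phi, of a pi l]
  by (simp add: Phi_def phi_pi_minus)

lemma Phi_pi: "a > 0 \<Longrightarrow> Phi pi a = 2 * Phi (pi/2) a"
  using Phi_pi_minus[of a "pi/2"] by simp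

lemma Phi_plus_int_pi:
  "a > 0 \<Longrightarrow> Phi (l + of_int k * pi) a = Phi l a + 2 * of_int k * Phi (pi/2) a"
  using interval_integral_periodic_upper[OF continuous_on_phi, of a pi l k]
  by (simp add: Phi_def[symmetric] phi_plus_pi Phi_pi)

lemma countable_sin_eq_0: "countable {s::real. sin s = 0}"
proof -
  have "{s::real. sin s = 0} \<subseteq> range (\<lambda>i::int. of_int i * pi)"
    by (auto simp: sin_zero_iff_int2)
  thus ?thesis by (rule countable_subset) simp
qed

lemma V_eq_Phi:
  assumes "u \<noteq> 0"
  shows "V l u = Phi l (abs u) - Phi (pi/2) (abs u)"
proof -
  have "(LBINT s=l..pi/2. Vintegrand u s) = (LBINT s=l..pi/2. -2 * phi \<bar>u\<bar> s)"
    by (rule interval_integral_discrete_difference[OF countable_sin_eq_0])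
       (auto simp: Vintegrand_eq_phi assms)
  also have "\<dots> = -2 * (Phi (pi/2) (abs u) - Phi l (abs u))"
    using assms by (simp only: interval_lebesgue_integral_mult_right Phi_diff)
  finally show ?thesis by (simp add: V_def)
qed

lemma V_symmetries:
  assumes "u \<noteq> 0"
  shows "V l u = V l (- u)
        \<and> V (pi - l) u = - V l u
        \<and> V l u + V (- l) u = 2 * V 0 u
        \<and> (\<forall>k::int. V (l + of_int k * pi) u = V l u - 2 * of_int k * V 0 u)"
proof -
  have a: "\<bar>u\<bar> > 0" using assms by simp
  have minus_u: "- u \<noteq> 0" using assms by simp
  show ?thesis
    unfolding V_eq_Phi[OF assms] V_eq_Phi[OF minus_u] abs_minus_cancel
    using Phi_pi_minus[OF a, of l] Phi_pi[OF a] Phi_uminus[OF a, of l] Phi_plus_int_pi[OF a, of l]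
    by (simp add: algebra_simps)
qed

lemma Phi_eq_integral_rescaled:
  assumes "a > 0"
  shows "Phi l a = integral {0..1} (\<lambda>t. l * phi a (l * t))"
proof -
  have "(LBINT t=(0::real)..(1::real). l *\<^sub>R phi a (l * t)) = (LBINT s=l*(0::real)..l*(1::real). phi a s)"
    by (rule interval_integral_substitution_finite[where g="\<lambda>t. l * t" and g'="\<lambda>_. l"])
       (auto intro!: derivative_eq_intros continuous_intros continuous_on_subset[OF continuous_on_phi[OF assms]])
  then have "Phi l a = (LBINT t=(0::real)..(1::real). l *\<^sub>R phi a (l * t))"
    by (simp add: Phi_def)
  also have "\<dots> = integral {0..1} (\<lambda>t. l * phi a (l * t))"
    by (auto intro!: interval_integral_eq_integral borel_integrable_atLeastAtMost' continuous_intros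
          continuous_on_compose2[OF continuous_on_phi[OF assms]])
  finally show ?thesis .
qed

lemma continuous_on_Phi: "continuous_on (UNIV \<times> {0<..}) (\<lambda>p. Phi (fst p) (snd p))"
proof -
  have "continuous_on ((UNIV \<times> {0<..}) \<times> cbox 0 1)
          (\<lambda>x. (\<lambda>(a, s). phi a s) (snd (fst x), fst (fst x) * snd x))"
    by (rule continuous_on_compose2[OF continuous_on_phi_joint]) (auto intro!: continuous_intros)
  then have "continuous_on ((UNIV \<times> {0<..}) \<times> cbox 0 1) (\<lambda>(p, t). fst p * phi (snd p) (fst p * t))"
    unfolding split_beta by (intro continuous_intros) auto
  then have "continuous_on (UNIV \<times> {0<..})
               (\<lambda>p. integral (cbox 0 1) (\<lambda>t. fst p * phi (snd p) (fst p * t)))"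
    by (rule integral_continuous_on_param)
  then show ?thesis
    by (rule continuous_on_eq) (auto simp: Phi_eq_integral_rescaled)
qed

lemma continuous_on_V: "continuous_on {p :: real \<times> real. snd p \<noteq> 0} (\<lambda>p. V (fst p) (snd p))"
proof -
  have "continuous_on {p::real \<times> real. snd p \<noteq> 0}
          (\<lambda>p. Phi (fst p) (abs (snd p)) - Phi (pi/2) (abs (snd p)))"
    by (intro continuous_intros
        continuous_on_compose2[OF continuous_on_Phi, where f="\<lambda>p. (_ p, abs (snd p))", simplified])
       auto
  then show ?thesis
    by (rule continuous_on_eq) (simp add: V_eq_Phi)
qed

lemma differentiable_integral_parameter:
  fixes f f' :: "real \<Rightarrow> real \<Rightarrow> real"
  assumes U: "open U" "convex U" "x0 \<in> U"
    and f': "\<And>x t. x \<in> U \<Longrightarrow> t \<in> {c..d} \<Longrightarrow> ((\<lambda>x. f x t) has_field_derivative f' x t) (at x)"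
    and cont_f: "\<And>x. x \<in> U \<Longrightarrow> continuous_on {c..d} (f x)"
    and cont_f': "continuous_on (U \<times> {c..d}) (\<lambda>(x, t). f' x t)"
    and g: "\<And>x. x \<in> U \<Longrightarrow> g x = integral {c..d} (f x)"
  shows "g differentiable (at x0)"
proof -
  have "((\<lambda>x. integral (cbox c d) (f x)) has_field_derivative integral (cbox c d) (f' x0))
          (at x0 within U)"
    using U cont_f' by (intro leibniz_rule_field_derivative integrable_continuous)
      (auto intro: has_field_derivative_at_within[OF f'] cont_f)
  then have "(g has_field_derivative integral (cbox c d) (f' x0)) (at x0)"
    using U g by (subst (asm) at_within_open) (auto elim!: has_field_derivative_transform_within_open)
  then show ?thesis using field_differentiable_imp_differentiable field_differentiable_def by blast
qed

lemma differentiable_Phi_above_sin: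
  assumes l: "0 \<le> l" "l \<le> pi/2" and a0: "sin l < a0"
  shows "(\<lambda>a. Phi l a) differentiable (at a0)"
proof (rule differentiable_integral_parameter)
  let ?U = "{sin l<..}"
  have sin_on_U: "0 \<le> sin t \<and> sin t < a \<and> 0 < a" if "a \<in> ?U" "t \<in> {0..l}" for a t
    using that l sin_monotone_2pi_le[of t l] sin_ge_zero[of t] sin_ge_zero[of l] by auto
  show "open ?U" "convex ?U" "a0 \<in> ?U" using a0 by auto
  show "((\<lambda>a. arccos (sin t / a)) has_field_derivative sin t / (a\<^sup>2 * sqrt (1 - (sin t / a)\<^sup>2))) (at a)"
    if "a \<in> ?U" "t \<in> {0..l}" for a t
    using sin_on_U[OF that]
    by (auto intro!: derivative_eq_intros simp: divide_simps power2_eq_square)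
  show "continuous_on {0..l} (\<lambda>t. arccos (sin t / a))" if "a \<in> ?U" for a
    using sin_on_U[OF that] by (intro continuous_intros) (fastforce simp: divide_simps)+
  have "(sin t / a)\<^sup>2 \<noteq> 1" if "a \<in> ?U" "t \<in> {0..l}" for a t
    using sin_on_U[OF that] by (simp add: divide_simps power_strict_mono less_imp_neq)
  moreover have "0 \<notin> ?U" using sin_on_U[of _ 0] l by force
  ultimately show "continuous_on (?U \<times> {0..l}) (\<lambda>(a, t). sin t / (a\<^sup>2 * sqrt (1 - (sin t / a)\<^sup>2)))"
    unfolding split_beta by (intro continuous_intros) force+
  show "Phi l a = integral {0..l} (\<lambda>t. arccos (sin t / a))" if "a \<in> ?U" for a
  proof -
    have "Phi l a = integral {0..l} (phi a)"
      unfolding Phi_def using sin_on_U[OF that] l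
      by (intro interval_integral_eq_integral borel_integrable_atLeastAtMost'
          continuous_on_subset[OF continuous_on_phi]) auto
    also have "\<dots> = integral {0..l} (\<lambda>t. arccos (sin t / a))"
      using sin_on_U[OF that] by (intro integral_cong) (simp add: phi_def)
    finally show ?thesis .
  qed
qed

lemma Phi_eq_Phi_pi_half:
  assumes l: "0 \<le> l" "l \<le> pi/2" and a: "0 < a" "a \<le> sin l"
  shows "Phi l a = Phi (pi/2) a"
proof -
  have "(LBINT s=l..pi/2. phi a s) = (LBINT s=l..pi/2. 0)"
  proof (rule interval_integral_cong)
    fix s assume "s \<in> einterval (min (ereal l) (ereal (pi/2))) (max (ereal l) (ereal (pi/2)))"
    hence s: "l < s" "s < pi/2" using l by (auto simp: einterval_iff min_def max_def)
    have "sin l \<le> sin s" using s l by (intro sin_monotone_2pi_le) auto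
    thus "phi a s = 0" using a by (intro phi_eq_0) auto
  qed
  thus ?thesis using Phi_diff[OF a(1), of "pi/2" l] by simp
qed

lemma abs_mult_sin_less_1:
  fixes a t :: real
  assumes "\<bar>a\<bar> < 1"
  shows "\<bar>a * sin t\<bar> < 1"
proof -
  have "\<bar>a\<bar> * \<bar>sin t\<bar> \<le> \<bar>a\<bar>" by (rule mult_left_le) simp_all
  with assms show ?thesis by (simp add: abs_mult)
qed

lemma Phi_pi_half_eq_integral:
  assumes a: "0 < a" "a < 1"
  shows "Phi (pi/2) a = integral {0..pi/2} (\<lambda>t. (pi/2 - t) * cos t * (a / sqrt (1 - (a * sin t)\<^sup>2)))"
    (is "_ = integral _ ?h")
proof -
  define g where "g t = arcsin (a * sin t)" for t
  define g' where "g' t = a * cos t / sqrt (1 - (a * sin t)\<^sup>2)" for t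
  have bound: "\<bar>a * sin t\<bar> < 1" for t using abs_mult_sin_less_1[of a t] a by simp
  then have radicand: "1 - (a * sin t)\<^sup>2 > 0" for t by (simp add: abs_square_less_1)
  have "Phi (pi/2) a = Phi (arcsin a) a"
    using a arcsin_less_mono[of 0 a] arcsin_less_mono[of a 1]
    by (intro Phi_eq_Phi_pi_half[symmetric]) auto
  also have "\<dots> = (LBINT t=(0::real)..pi/2. g' t *\<^sub>R phi a (g t))"
    unfolding Phi_def
  proof (subst interval_integral_substitution_finite[of 0 "pi/2" g g'])
    show "(g has_real_derivative g' x) (at x within {0..pi/2})" for x
      unfolding g_def g'_def using bound[of x] radicand[of x]
      by (auto intro!: derivative_eq_intros simp: abs_less_iff divide_simps)
    show "continuous_on {0..pi/2} g'"
      unfolding g'_def using radicand by (intro continuous_intros) (auto simp: less_imp_neq[symmetric])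
  qed (auto simp: g_def intro: continuous_on_subset[OF continuous_on_phi[OF a(1)]])
  also have "\<dots> = (LBINT t=(0::real)..pi/2. ?h t)"
  proof (rule interval_integral_cong)
    fix t assume "t \<in> einterval (min (ereal 0) (ereal (pi/2))) (max (ereal 0) (ereal (pi/2)))"
    hence t: "0 < t" "t < pi/2" by (auto simp: einterval_iff min_def max_def)
    have "phi a (g t) = arccos (cos (pi/2 - t))"
      using bound[of t, unfolded abs_less_iff] a t sin_ge_zero[of t] by (simp add: phi_def g_def abs_mult cos_diff)
    also have "\<dots> = pi/2 - t" using t by (intro arccos_cos) auto
    finally show "g' t *\<^sub>R phi a (g t) = ?h t" by (simp add: g'_def)
  qed
  also have "\<dots> = integral {0..pi/2} ?h"
    using radicand
    by (intro interval_integral_eq_integral borel_integrable_atLeastAtMost' continuous_intros)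
       (auto simp: less_imp_neq[symmetric])
  finally show ?thesis .
qed

lemma has_real_derivative_div_sqrt:
  fixes a s :: real
  assumes "(a * s)\<^sup>2 < 1"
  shows "((\<lambda>a. a / sqrt (1 - (a * s)\<^sup>2)) has_real_derivative
           1 / ((1 - (a * s)\<^sup>2) * sqrt (1 - (a * s)\<^sup>2))) (at a)"
  using assms by (auto intro!: derivative_eq_intros simp: power2_eq_square) (simp add: field_simps)

lemma differentiable_Phi_pi_half_below_1:
  assumes a0: "0 < a0" "a0 < 1"
  shows "(\<lambda>a. Phi (pi/2) a) differentiable (at a0)"
proof (rule differentiable_integral_parameter)
  let ?U = "{0::real<..<1}"
  have radicand: "1 - (a * sin t)\<^sup>2 > 0" if "a \<in> ?U" for a t
    using abs_mult_sin_less_1[of a t] that by (simp add: abs_square_less_1)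
  show "open ?U" "convex ?U" "a0 \<in> ?U" using a0 by auto
  show "((\<lambda>a. (pi/2 - t) * cos t * (a / sqrt (1 - (a * sin t)\<^sup>2))) has_field_derivative
          (pi/2 - t) * cos t * (1 / ((1 - (a * sin t)\<^sup>2) * sqrt (1 - (a * sin t)\<^sup>2)))) (at a)"
    if "a \<in> ?U" for a t
    using radicand[OF that] by (intro DERIV_cmult has_real_derivative_div_sqrt) simp
  show "continuous_on {0..pi/2} (\<lambda>t. (pi/2 - t) * cos t * (a / sqrt (1 - (a * sin t)\<^sup>2)))"
    if "a \<in> ?U" for a
    using radicand[OF that] by (intro continuous_intros) (auto simp: less_imp_neq[symmetric])
  show "continuous_on (?U \<times> {0..pi/2})
          (\<lambda>(a, t). (pi/2 - t) * cos t * (1 / ((1 - (a * sin t)\<^sup>2) * sqrt (1 - (a * sin t)\<^sup>2))))"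
    using radicand unfolding split_beta
    by (intro continuous_intros) (force simp: less_imp_neq[symmetric])+
qed (simp add: Phi_pi_half_eq_integral)

lemma differentiable_Phi_pi_half:
  assumes "0 < a0" "a0 \<noteq> 1"
  shows "(\<lambda>a. Phi (pi/2) a) differentiable (at a0)"
proof (cases "a0 < 1")
  case True
  then show ?thesis using differentiable_Phi_pi_half_below_1 assms by blast
next
  case False
  then show ?thesis using differentiable_Phi_above_sin[of "pi/2" a0] assms by simp
qed

lemma differentiable_Phi_reduced:
  assumes l: "0 \<le> l" "l \<le> pi/2" and a0: "0 < a0" "a0 \<noteq> 1" "sin l \<noteq> a0"
  shows "(\<lambda>a. Phi l a) differentiable (at a0)"
proof (cases "sin l < a0")
  case True
  then show ?thesis using differentiable_Phi_above_sin l by blast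
next
  case False
  with a0 have "a0 \<in> {0<..<sin l}" by simp
  moreover have "Phi (pi/2) a = Phi l a" if "a \<in> {0<..<sin l}" for a
    using Phi_eq_Phi_pi_half[OF l, of a] that by simp
  ultimately show ?thesis
    by (intro differentiable_transform_within_open[OF differentiable_Phi_pi_half[OF a0(1,2)],
        where S="{0<..<sin l}"]) auto
qed

lemma int_pi_decomposition:
  fixes l :: real
  obtains k :: int and d :: real where "l = d + of_int k * pi" "\<bar>d\<bar> \<le> pi/2"
proof -
  define k where "k = \<lfloor>l / pi + 1/2\<rfloor>"
  have "of_int k \<le> l / pi + 1/2" "l / pi + 1/2 < of_int k + 1" unfolding k_def by linarith+
  hence "of_int k * pi \<le> l + pi/2" "l + pi/2 < (of_int k + 1) * pi"
    using pi_gt_zero by (simp_all add: field_simps)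
  hence "\<bar>l - of_int k * pi\<bar> \<le> pi/2" unfolding abs_le_iff by (auto simp: algebra_simps)
  thus ?thesis using that[of "l - of_int k * pi" k] by simp
qed

lemma sin_plus_int_pi_squared: "(sin (d + of_int k * pi))\<^sup>2 = (sin d)\<^sup>2"
proof -
  have s: "sin (of_int k * pi) = 0" by (auto simp: sin_zero_iff_int2)
  then have c: "(cos (of_int k * pi))\<^sup>2 = 1" using sin_cos_squared_add[of "of_int k * pi"] by simp
  show ?thesis by (simp add: sin_add s power_mult_distrib c)
qed

lemma differentiable_Phi:
  assumes a0: "0 < a0" "a0 \<noteq> 1" "(sin l)\<^sup>2 \<noteq> a0\<^sup>2"
  shows "(\<lambda>a. Phi l a) differentiable (at a0)"
proof -
  obtain k d where kd: "l = d + of_int k * pi" "\<bar>d\<bar> \<le> pi/2" by (rule int_pi_decomposition)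
  have "(sin \<bar>d\<bar>)\<^sup>2 = (sin l)\<^sup>2"
    using kd sin_plus_int_pi_squared[of d k] by (cases "d \<ge> 0") auto
  moreover have "sin \<bar>d\<bar> \<ge> 0" using kd by (intro sin_ge_zero) auto
  ultimately have "sin \<bar>d\<bar> \<noteq> a0" using a0 by auto
  then have reduced: "(\<lambda>a. sgn d * Phi \<bar>d\<bar> a + 2 * of_int k * Phi (pi/2) a) differentiable (at a0)"
    using kd a0
    by (intro differentiable_add differentiable_mult differentiable_const
        differentiable_Phi_reduced differentiable_Phi_pi_half) auto
  have "sgn d * Phi \<bar>d\<bar> a + 2 * of_int k * Phi (pi/2) a = Phi l a" if "a > 0" for a
  proof -
    have "sgn d * Phi \<bar>d\<bar> a = Phi d a"
      using Phi_uminus[OF that, of d] by (cases d "0::real" rule: linorder_cases) simp_all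
    with Phi_plus_int_pi[OF that, of d k] show ?thesis unfolding kd(1) by simp
  qed
  with a0 show ?thesis
    by (intro differentiable_transform_within_open[OF reduced, where S="{0<..}"]) auto
qed

lemma DERIV_Phi: "a > 0 \<Longrightarrow> DERIV (\<lambda>l. Phi l a) l :> phi a l"
  unfolding Phi_def by (rule DERIV_interval_integral_upper[OF continuous_on_phi])

lemma differentiable_Phi_joint:
  assumes a0: "0 < a0" "a0 \<noteq> 1" "(sin l0)\<^sup>2 \<noteq> a0\<^sup>2"
  shows "(\<lambda>(a, l). Phi l a) differentiable (at (a0, l0))"
proof -
  obtain D where D: "((\<lambda>a. Phi l0 a) has_derivative D) (at a0)"
    using differentiable_Phi[OF a0] unfolding differentiable_def by blast
  have "((\<lambda>(a, l). Phi l a) has_derivative (\<lambda>(ta, tl). D ta + blinfun_mult_right (phi a0 l0) tl))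
          (at (a0, l0) within {0<..} \<times> UNIV)"
  \<comment> \<open>Only the partial derivative in \<open>l\<close>, namely \<open>phi\<close>, must be jointly continuous.\<close>
  proof (rule has_derivative_partialsI)
    show "((\<lambda>a. Phi l0 a) has_derivative D) (at a0 within {0<..})"
      using D by (rule has_derivative_at_withinI)
    show "((\<lambda>l. Phi l a) has_derivative blinfun_apply (blinfun_mult_right (phi a l))) (at l within UNIV)"
      if "a \<in> {0<..}" for a l
      using DERIV_Phi[of a l] that by (simp add: has_field_derivative_eq_has_derivative_blinfun)
    have "continuous_on ({0<..} \<times> UNIV) (\<lambda>(a, l). blinfun_mult_right (phi a l))"
      using continuous_on_phi_joint unfolding split_beta by (intro continuous_intros) auto
    then show "continuous (at (a0, l0) within {0<..} \<times> UNIV) (\<lambda>(a, l). blinfun_mult_right (phi a l))"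
      using a0 continuous_on_eq_continuous_within by blast
  qed auto
  moreover have "at (a0, l0) within {0<..} \<times> UNIV = at (a0, l0)"
    using a0 by (intro at_within_open) (auto intro: open_Times)
  ultimately show ?thesis unfolding differentiable_def by auto
qed

lemma differentiable_V:
  assumes p: "snd p \<noteq> 0" "(snd p)\<^sup>2 \<noteq> 1" "(sin (fst p))\<^sup>2 \<noteq> (snd p)\<^sup>2"
  shows "(\<lambda>q. V (fst q) (snd q)) differentiable (at p)"
proof -
  define s where "s = sgn (snd p)"
  have s_snd: "s * snd p = \<bar>snd p\<bar>" by (simp add: s_def abs_sgn)
  have a0: "0 < s * snd p" "s * snd p \<noteq> 1" "(sin (fst p))\<^sup>2 \<noteq> (s * snd p)\<^sup>2"
    using p unfolding s_snd by (auto simp: abs_eq_iff power2_eq_1_iff)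
  have "(\<lambda>q. (s * snd q, fst q)) differentiable (at p)"
    by (intro differentiable_Pair differentiable_mult differentiable_const bounded_linear_imp_differentiable
        bounded_linear_fst bounded_linear_snd)
  from differentiable_chain_at[OF this differentiable_Phi_joint[OF a0]]
  have "(\<lambda>q. Phi (fst q) (s * snd q)) differentiable (at p)" by (simp add: o_def)
  moreover have "(\<lambda>q. s * snd q) differentiable (at p)"
    by (intro differentiable_mult differentiable_const bounded_linear_imp_differentiable bounded_linear_snd)
  from differentiable_chain_at[OF this differentiable_Phi_pi_half[OF a0(1,2)]]
  have "(\<lambda>q. Phi (pi/2) (s * snd q)) differentiable (at p)" by (simp add: o_def)
  ultimately have diff: "(\<lambda>q. Phi (fst q) (s * snd q) - Phi (pi/2) (s * snd q)) differentiable (at p)"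
    by (rule differentiable_diff)
  have "Phi (fst q) (s * snd q) - Phi (pi/2) (s * snd q) = V (fst q) (snd q)"
    if "q \<in> {q. 0 < s * snd q}" for q
  proof -
    have "s * snd q = \<bar>snd q\<bar>" "snd q \<noteq> 0"
      using that p(1) by (cases "snd p > 0"; auto simp: s_def)+
    then show ?thesis by (simp add: V_eq_Phi)
  qed
  moreover have "open {q::real \<times> real. 0 < s * snd q}"
    by (intro open_Collect_less continuous_intros)
  ultimately show ?thesis
    using a0(1) by (intro differentiable_transform_within_open[OF diff]) auto
qed

lemma null_sets_countable_sections:
  fixes N :: "(real \<times> real) set"
  assumes "N \<in> sets borel" "\<And>x. countable (Pair x -` N)"
  shows "N \<in> null_sets lborel"
proof -
  have N: "N \<in> sets (lborel \<Otimes>\<^sub>M lborel)" unfolding lborel_prod using assms(1) by simp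
  have "emeasure (lborel \<Otimes>\<^sub>M lborel) N = (\<integral>\<^sup>+x. emeasure lborel (Pair x -` N) \<partial>lborel)"
    by (rule sigma_finite_measure.emeasure_pair_measure_alt[OF sigma_finite_lborel N])
  also have "\<dots> = 0" by (simp add: emeasure_lborel_countable assms(2))
  finally show ?thesis using assms(1) by (simp add: lborel_prod null_sets_def)
qed

lemma AE_differentiable_V:
  "AE p in (lborel :: (real \<times> real) measure).
     snd p \<noteq> 0 \<longrightarrow> (\<lambda>q. V (fst q) (snd q)) differentiable (at p)"
proof (rule AE_I')
  define N where "N = {p :: real \<times> real. snd p * ((snd p)\<^sup>2 - 1) * ((sin (fst p))\<^sup>2 - (snd p)\<^sup>2) = 0}"
  have "closed N" unfolding N_def by (intro closed_Collect_eq continuous_intros)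
  moreover have "countable (Pair x -` N)" for x
  proof (rule countable_subset)
    show "Pair x -` N \<subseteq> {0, 1, -1, sin x, - sin x}"
      by (auto simp: N_def power2_eq_1_iff power2_eq_iff)
  qed simp
  ultimately show "N \<in> null_sets lborel" by (intro null_sets_countable_sections borel_closed)
  show "{p \<in> space lborel. \<not> (snd p \<noteq> 0 \<longrightarrow> (\<lambda>q. V (fst q) (snd q)) differentiable (at p))} \<subseteq> N"
    using differentiable_V by (force simp: N_def)
qed

theorem lemma7:
  shows "continuous_on {p :: real \<times> real. snd p \<noteq> 0} (\<lambda>p. V (fst p) (snd p))
    \<and> (AE p in (lborel :: (real \<times> real) measure).
          snd p \<noteq> 0 \<longrightarrow> (\<lambda>q. V (fst q) (snd q)) differentiable (at p))
    \<and> (\<forall>l u. u \<noteq> 0 \<longrightarrow>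
          V l u = V l (- u)
        \<and> V (pi - l) u = - V l u
        \<and> V l u + V (- l) u = 2 * V 0 u
        \<and> (\<forall>k::int. V (l + of_int k * pi) u = V l u - 2 * of_int k * V 0 u))"
  using continuous_on_V AE_differentiable_V V_symmetries by blast

end
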